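(* Let $F$ be a periodic fabric of order greater than $4$ whose side-preserving symmetry group $H_1$ is generated by side-preserving glide-reflections and is transitive on the set of all strands (warps and wefts together). Suppose $F$ is perfectly coloured by thin striping (for one of the two possible choices of thin striping). Then the resulting pattern, regarded as a design, is the design of an isonemal prefabric that falls apart.
   Context: The plane is divided into unit square cells by a square grid. A prefabric (here two-layered) consists of vertical strands (warps, the columns of cells) and horizontal strands (wefts, the rows of cells), together with a specification, in every cell, of which of the two strands crossing there is uppermost when viewed from a fixed side (the obverse). Its design is the dark/pale colouring of the cells in which a cell is dark if the warp is uppermost there and pale if the weft is uppermost (normal colouring); conversely any dark/pale colouring of the cells, regarded as a design, determines a prefabric in this way. A prefabric is periodic if it is invariant under two linearly independent translations; its order is the length of the period of the (one-dimensional, periodic) up/down sequence along a strand. A symmetry of a prefabric is an isometry of the plane mapping the grid to itself and the prefabric to itself, possibly composed with side reversal $\tau$ (reflection in the plane of the prefabric, which interchanges which strand is uppermost in every cell); those not involving $\tau$ are side-preserving and those involving $\tau$ are side-reversing. The symmetry group is $G_1$ and its side-preserving subgroup is $H_1$. A prefabric is isonemal if $G_1$ is transitive on the set of all strands. A fabric is a prefabric that does not fall apart; a prefabric falls apart if there is a nonempty proper subset $S$ of its strands such that at every cell where a strand of $S$ crosses a strand not in $S$, the strand of $S$ is uppermost (so the strands of $S$ can be lifted off the rest). Thin striping colours the strands (not the cells) with two colours: warps alternately dark and pale, and wefts alternately dark and pale; there are two essentially different ways to do this relative to the fabric. The resulting pattern colours each cell with the colour of the strand uppermost in that cell. The colouring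 is perfect if every symmetry in $G_1$ permutes the strand colours consistently, i.e. maps all dark strands to dark strands and all pale strands to pale strands, or all dark strands to pale strands and all pale strands to dark strands. *)

theory Defs
  imports Main
begin

text \<open>Cells of the grid are indexed by integer pairs (i,j): column i (warp i),
row j (weft j).  A prefabric (equivalently, a design under normal colouring)
is a map cell => bool, True meaning dark, i.e. the warp is uppermost.\<close>

type_synonym cell = "int \<times> int"
type_synonym prefabric = "cell \<Rightarrow> bool"

datatype strand = Warp int | Weft int

text \<open>Isometries of the plane mapping the grid to itself, described by their
(faithful) action on cells: signed permutation linear part, integer translation.
sw = True means warps and wefts are interchanged.\<close>

definition grid_map :: "bool \<Rightarrow> int \<Rightarrow> int \<Rightarrow> int \<Rightarrow> int \<Rightarrow> cell \<Rightarrow> cell" where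
  "grid_map sw a b t1 t2 = (\<lambda>(x,y). if sw then (a*y + t1, b*x + t2) else (a*x + t1, b*y + t2))"

definition grid_iso :: "(cell \<Rightarrow> cell) \<Rightarrow> bool" where
  "grid_iso f \<longleftrightarrow> (\<exists>sw a b t1 t2. a \<in> {1,-1} \<and> b \<in> {1,-1} \<and> f = grid_map sw a b t1 t2)"

definition swaps :: "(cell \<Rightarrow> cell) \<Rightarrow> bool" where
  "swaps f \<longleftrightarrow> fst (f (1,0)) = fst (f (0,0))"

definition orientation_reversing :: "(cell \<Rightarrow> cell) \<Rightarrow> bool" where
  "orientation_reversing f \<longleftrightarrow> (\<exists>sw a b t1 t2. a \<in> {1,-1} \<and> b \<in> {1,-1} \<and>
      f = grid_map sw a b t1 t2 \<and> (if sw then a*b = 1 else a*b = -1))"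

text \<open>Glide-reflection: orientation-reversing isometry that is not a reflection
(an orientation-reversing isometry is a reflection iff it is an involution).\<close>
definition glide_reflection :: "(cell \<Rightarrow> cell) \<Rightarrow> bool" where
  "glide_reflection f \<longleftrightarrow> grid_iso f \<and> orientation_reversing f \<and> f \<circ> f \<noteq> id"

fun strand_map :: "(cell \<Rightarrow> cell) \<Rightarrow> strand \<Rightarrow> strand" where
  "strand_map f (Warp i) = (if swaps f then Weft (snd (f (i,0))) else Warp (fst (f (i,0))))"
| "strand_map f (Weft j) = (if swaps f then Warp (fst (f (0,j))) else Weft (snd (f (0,j))))"

text \<open>Symmetry of a prefabric; eps = True means composed with side reversal tau.
The strand uppermost at c is mapped to the strand uppermost at f c.\<close>
definition symmetry_with :: "prefabric \<Rightarrow> (cell \<Rightarrow> cell) \<Rightarrow> bool \<Rightarrow> bool" where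
  "symmetry_with P f eps \<longleftrightarrow> grid_iso f \<and> (\<forall>c. P (f c) = ((P c \<noteq> swaps f) \<noteq> eps))"

definition symmetry :: "prefabric \<Rightarrow> (cell \<Rightarrow> cell) \<Rightarrow> bool" where
  "symmetry P f \<longleftrightarrow> (\<exists>eps. symmetry_with P f eps)"

definition side_pres_symmetry :: "prefabric \<Rightarrow> (cell \<Rightarrow> cell) \<Rightarrow> bool" where
  "side_pres_symmetry P f \<longleftrightarrow> symmetry_with P f False"

inductive_set generated :: "(cell \<Rightarrow> cell) set \<Rightarrow> (cell \<Rightarrow> cell) set" for S where
  gen_id: "id \<in> generated S"
| gen_mult: "g \<in> S \<Longrightarrow> h \<in> generated S \<Longrightarrow> g \<circ> h \<in> generated S"
| gen_inv: "g \<in> S \<Longrightarrow> h \<in> generated S \<Longrightarrow> inv g \<circ> h \<in> generated S"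

definition H1_generated_by_glides :: "prefabric \<Rightarrow> bool" where
  "H1_generated_by_glides P \<longleftrightarrow>
     {f. side_pres_symmetry P f} = generated {f. side_pres_symmetry P f \<and> glide_reflection f}"

definition isonemal :: "prefabric \<Rightarrow> bool" where
  "isonemal P \<longleftrightarrow> (\<forall>s s'. \<exists>f. symmetry P f \<and> strand_map f s = s')"

definition H1_transitive :: "prefabric \<Rightarrow> bool" where
  "H1_transitive P \<longleftrightarrow> (\<forall>s s'. \<exists>f. side_pres_symmetry P f \<and> strand_map f s = s')"

definition periodic :: "prefabric \<Rightarrow> bool" where
  "periodic P \<longleftrightarrow> (\<exists>u1 u2 v1 v2 :: int. u1 * v2 - u2 * v1 \<noteq> 0 \<and>
      (\<forall>x y. P (x + u1, y + u2) = P (x, y)) \<and> (\<forall>x y. P (x + v1, y + v2) = P (x, y)))"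

text \<open>Up/down sequence along a strand (True = that strand is up).\<close>
fun strand_seq :: "prefabric \<Rightarrow> strand \<Rightarrow> int \<Rightarrow> bool" where
  "strand_seq P (Warp i) = (\<lambda>j. P (i, j))"
| "strand_seq P (Weft j) = (\<lambda>i. \<not> P (i, j))"

definition fabric_order :: "prefabric \<Rightarrow> nat" where
  "fabric_order P = (LEAST n. n > 0 \<and> (\<forall>s k. strand_seq P s (k + int n) = strand_seq P s k))"

definition falls_apart :: "prefabric \<Rightarrow> bool" where
  "falls_apart P \<longleftrightarrow> (\<exists>S. S \<noteq> {} \<and> S \<noteq> UNIV \<and>
     (\<forall>i j. (Warp i \<in> S \<and> Weft j \<notin> S \<longrightarrow> P (i,j)) \<and>
            (Weft j \<in> S \<and> Warp i \<notin> S \<longrightarrow> \<not> P (i,j))))"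

definition fabric :: "prefabric \<Rightarrow> bool" where
  "fabric P \<longleftrightarrow> \<not> falls_apart P"

fun thin_striping :: "int \<Rightarrow> int \<Rightarrow> strand \<Rightarrow> bool" where
  "thin_striping p q (Warp i) = (i mod 2 = p)"
| "thin_striping p q (Weft j) = (j mod 2 = q)"

definition pattern :: "prefabric \<Rightarrow> (strand \<Rightarrow> bool) \<Rightarrow> prefabric" where
  "pattern P col = (\<lambda>(i,j). if P (i,j) then col (Warp i) else col (Weft j))"

definition perfect_colouring :: "prefabric \<Rightarrow> (strand \<Rightarrow> bool) \<Rightarrow> bool" where
  "perfect_colouring P col \<longleftrightarrow> (\<forall>f. symmetry P f \<longrightarrow>
      (\<forall>s. col (strand_map f s) = col s) \<or> (\<forall>s. col (strand_map f s) = (\<not> col s)))"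

end

theory Submission
  imports Defs
begin

text \<open>A side-preserving symmetry of the fabric either preserves every strand colour of a perfect
colouring or reverses every one. Since the pattern colours each cell by its uppermost strand,
such a symmetry maps the pattern to itself, up to exchanging dark and pale; that exchange is the
side reversal of the pattern regarded as a design, so transitivity of \<open>H\<^sub>1\<close> on strands makes
the pattern isonemal. The pattern falls apart because of its colours alone: where a dark warp
crosses a dark weft the cell is dark whichever strand is on top, and where a pale warp crosses a
pale weft it is pale, so the dark warps together with the pale wefts can be lifted off.\<close>

lemma swaps_grid_map: "a \<in> {1,-1} \<Longrightarrow> swaps (grid_map sw a b t1 t2) = sw"
  by (auto simp: swaps_def grid_map_def)

lemma symmetry_with_pattern:
  assumes sym: "side_pres_symmetry P f"
    and col: "\<And>s. col (strand_map f s) = (col s \<noteq> d)"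
  shows "symmetry_with (pattern P col) f (d \<noteq> swaps f)"
proof -
  from sym have iso: "grid_iso f" and up: "\<And>c. P (f c) = (P c \<noteq> swaps f)"
    by (auto simp: side_pres_symmetry_def symmetry_with_def)
  from iso obtain sw a b t1 t2 where ab: "a \<in> {1,-1}" and f: "f = grid_map sw a b t1 t2"
    unfolding grid_iso_def by blast
  have sw: "swaps f = sw" using f ab swaps_grid_map by simp
  have "pattern P col (f (i,j)) = (pattern P col (i,j) \<noteq> d)" for i j
  proof (cases sw)
    case True
    then have fij: "f (i,j) = (a*j+t1, b*i+t2)" using f by (simp add: grid_map_def)
    have "P (f (i,j)) = (\<not> P (i,j))" using True sw up by simp
    moreover have "col (Weft (b*i+t2)) = (col (Warp i) \<noteq> d)"
      and "col (Warp (a*j+t1)) = (col (Weft j) \<noteq> d)"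
      using f sw True col[of "Warp i"] col[of "Weft j"] by (simp_all add: grid_map_def)
    ultimately show ?thesis using fij by (auto simp: pattern_def)
  next
    case False
    then have fij: "f (i,j) = (a*i+t1, b*j+t2)" using f by (simp add: grid_map_def)
    have "P (f (i,j)) = P (i,j)" using False sw up by simp
    moreover have "col (Warp (a*i+t1)) = (col (Warp i) \<noteq> d)"
      and "col (Weft (b*j+t2)) = (col (Weft j) \<noteq> d)"
      using f sw False col[of "Warp i"] col[of "Weft j"] by (simp_all add: grid_map_def)
    ultimately show ?thesis using fij by (auto simp: pattern_def)
  qed
  then show ?thesis using iso unfolding symmetry_with_def by auto
qed

lemma isonemal_pattern:
  assumes trans: "H1_transitive P" and perfect: "perfect_colouring P col"
  shows "isonemal (pattern P col)"
  unfolding isonemal_def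
proof (intro allI)
  fix s s'
  obtain f where sym: "side_pres_symmetry P f" and fs: "strand_map f s = s'"
    using trans unfolding H1_transitive_def by blast
  then have "symmetry P f" unfolding symmetry_def side_pres_symmetry_def by blast
  then obtain d where "\<And>s. col (strand_map f s) = (col s \<noteq> d)"
    using perfect unfolding perfect_colouring_def by (metis (full_types))
  then have "symmetry_with (pattern P col) f (d \<noteq> swaps f)"
    by (rule symmetry_with_pattern[OF sym])
  then show "\<exists>f. symmetry (pattern P col) f \<and> strand_map f s = s'"
    using fs unfolding symmetry_def by blast
qed

lemma falls_apart_pattern:
  assumes "col (Warp i)" and "\<not> col (Warp i')"
  shows "falls_apart (pattern P col)"
  unfolding falls_apart_def
proof (intro exI conjI allI)
  let ?S = "{Warp i | i. col (Warp i)} \<union> {Weft j | j. \<not> col (Weft j)}"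
  show "?S \<noteq> {}" and "?S \<noteq> UNIV" using assms by blast+
  fix i j
  show "Warp i \<in> ?S \<and> Weft j \<notin> ?S \<longrightarrow> pattern P col (i, j)"
    and "Weft j \<in> ?S \<and> Warp i \<notin> ?S \<longrightarrow> \<not> pattern P col (i, j)"
    by (auto simp: pattern_def)
qed

theorem theorem3p1:
  fixes P :: prefabric and p q :: int
  assumes "fabric P"
    and "periodic P"
    and "fabric_order P > 4"
    and "H1_generated_by_glides P"
    and "H1_transitive P"
    and "p \<in> {0,1}" and "q \<in> {0,1}"
    and "perfect_colouring P (thin_striping p q)"
  shows "isonemal (pattern P (thin_striping p q)) \<and> falls_apart (pattern P (thin_striping p q))"
proof
  show "isonemal (pattern P (thin_striping p q))"
    using assms(5,8) by (rule isonemal_pattern)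
  have "thin_striping p q (Warp p)" and "\<not> thin_striping p q (Warp (p + 1))"
    using assms(6) by auto
  then show "falls_apart (pattern P (thin_striping p q))"
    by (rule falls_apart_pattern)
qed

end
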